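(* Let $f\in{\rm elh}(\mathbb{C})$ be non-polynomial and $g\in{\rm elh}(\mathbb{C})$, suppose there is $h_1\in{\rm elh}(\mathbb{C})$ with $h_1\neq g$ and $f\circ h_1=f\circ g$, and let $t(z),h(z),L(w)$ be entire functions with $f(g(z)+we^{t(z)})=f(g(z))+e^{L(w)+h(z)}\sin\pi w$ for all $(z,w)\in\mathbb{C}^2$. Then: (a) $L'(w)\sin\pi w+\pi\cos\pi w$ never vanishes; (b) the function $-h'(z)f(g(z)+we^{t(z)})+(g'(z)+wt'(z)e^{t(z)})f'(g(z)+we^{t(z)})$ is independent of $w$.
   Context: ${\rm elh}(\mathbb{C})$ denotes the set of entire functions with nowhere vanishing derivative and derivative $1$ at $0$. *)

theory Defs
  imports "HOL-Complex_Analysis.Complex_Analysis" "HOL-Computational_Algebra.Polynomial"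
begin

definition elh :: "(complex \<Rightarrow> complex) set" where
  "elh = {f. f holomorphic_on UNIV \<and> (\<forall>z. deriv f z \<noteq> 0) \<and> deriv f 0 = 1}"

definition is_polynomial_fun :: "(complex \<Rightarrow> complex) \<Rightarrow> bool" where
  "is_polynomial_fun f \<longleftrightarrow> (\<exists>p. \<forall>z. f z = poly p z)"

end

theory Submission
  imports Defs
begin

text \<open>Both claims come from differentiating the functional equation: in \<open>w\<close> at a fixed \<open>z\<close>
  the left side has derivative \<open>f'(\<dots>) e^{t z} \<noteq> 0\<close>, which is \<open>e^{L w + h z}\<close> times the
  expression in (a); in \<open>z\<close> at a fixed \<open>w\<close>, the factor \<open>e^{L w + h z} sin \<pi>w\<close> reproduces
  itself with the factor \<open>h'\<close> and can be eliminated using the equation once more, leaving a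
  right-hand side that does not involve \<open>w\<close>.\<close>

lemma holomorphic_on_UNIV_has_field_derivative:
  "f holomorphic_on UNIV \<Longrightarrow> (f has_field_derivative deriv f z) (at z)"
  by (meson DERIV_deriv_iff_field_differentiable UNIV_I holomorphic_on_imp_differentiable_at open_UNIV)

lemma exp_times_factor_log_deriv_nonzero:
  fixes f L s s' :: "complex \<Rightarrow> complex"
  assumes f: "f holomorphic_on UNIV" and f_deriv_nonzero: "\<And>z. deriv f z \<noteq> 0"
    and L: "L holomorphic_on UNIV" and s: "\<And>w. (s has_field_derivative s' w) (at w)"
    and "c \<noteq> 0"
    and eq: "\<And>w. f (a + w * c) = b + exp (L w + k) * s w"
  shows "deriv L w * s w + s' w \<noteq> 0"
proof -
  have "((\<lambda>v. f (a + v * c)) has_field_derivative deriv f (a + w * c) * c) (at w)"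
    by (rule DERIV_chain'[where f="\<lambda>v. a + v * c" and g=f,
          OF _ holomorphic_on_UNIV_has_field_derivative[OF f], simplified])
       (auto intro!: derivative_eq_intros)
  moreover have "((\<lambda>v. f (a + v * c)) has_field_derivative
      exp (L w + k) * (deriv L w * s w + s' w)) (at w)"
    unfolding eq
    by (auto intro!: derivative_eq_intros s holomorphic_on_UNIV_has_field_derivative[OF L]
        simp: algebra_simps)
  ultimately have "deriv f (a + w * c) * c = exp (L w + k) * (deriv L w * s w + s' w)"
    by (rule DERIV_unique)
  then show ?thesis
    using f_deriv_nonzero \<open>c \<noteq> 0\<close> by auto
qed

lemma exp_multiple_difference_deriv_eq:
  fixes f g h \<phi> \<phi>' :: "complex \<Rightarrow> complex"
  assumes f: "f holomorphic_on UNIV" and g: "g holomorphic_on UNIV" and h: "h holomorphic_on UNIV"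
    and \<phi>: "\<And>z. (\<phi> has_field_derivative \<phi>' z) (at z)"
    and eq: "\<And>z. f (\<phi> z) = f (g z) + exp (h z) * C"
  shows "- deriv h z * f (\<phi> z) + \<phi>' z * deriv f (\<phi> z)
    = deriv f (g z) * deriv g z - deriv h z * f (g z)"
proof -
  note df = holomorphic_on_UNIV_has_field_derivative[OF f]
  have "((\<lambda>z. f (\<phi> z)) has_field_derivative deriv f (\<phi> z) * \<phi>' z) (at z)"
    by (rule DERIV_chain'[OF \<phi> df])
  moreover have "((\<lambda>z. f (\<phi> z)) has_field_derivative
      deriv f (g z) * deriv g z + deriv h z * (exp (h z) * C)) (at z)"
    unfolding eq
    by (auto intro!: derivative_eq_intros holomorphic_on_UNIV_has_field_derivative[OF h]
        DERIV_chain'[OF holomorphic_on_UNIV_has_field_derivative[OF g] df] simp: algebra_simps)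
  ultimately have "deriv f (\<phi> z) * \<phi>' z = deriv f (g z) * deriv g z + deriv h z * (exp (h z) * C)"
    by (rule DERIV_unique)
  also have "exp (h z) * C = f (\<phi> z) - f (g z)"
    using eq by simp
  finally show ?thesis
    by (simp add: algebra_simps)
qed

theorem proposition3p30:
  fixes f g h1 t h L :: "complex \<Rightarrow> complex"
  assumes "f \<in> elh" and "\<not> is_polynomial_fun f" and "g \<in> elh"
    and "h1 \<in> elh" and "h1 \<noteq> g" and "f \<circ> h1 = f \<circ> g"
    and "t holomorphic_on UNIV" and "h holomorphic_on UNIV" and "L holomorphic_on UNIV"
    and "\<forall>z w. f (g z + w * exp (t z)) = f (g z) + exp (L w + h z) * sin (of_real pi * w)"
  shows "(\<forall>w. deriv L w * sin (of_real pi * w) + of_real pi * cos (of_real pi * w) \<noteq> 0)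
    \<and> (\<exists>c. \<forall>z w. - deriv h z * f (g z + w * exp (t z))
                 + (deriv g z + w * deriv t z * exp (t z)) * deriv f (g z + w * exp (t z)) = c z)"
proof -
  have f: "f holomorphic_on UNIV" and f_deriv_nonzero: "\<And>z. deriv f z \<noteq> 0"
    and g: "g holomorphic_on UNIV"
    using assms(1,3) by (auto simp: elh_def)
  note eq = assms(10)
  have "deriv L w * sin (of_real pi * w) + of_real pi * cos (of_real pi * w) \<noteq> 0" for w
    by (rule exp_times_factor_log_deriv_nonzero[OF f f_deriv_nonzero assms(9), where
          a = "g 0" and c = "exp (t 0)" and b = "f (g 0)" and k = "h 0"])
       (auto intro!: derivative_eq_intros simp: eq)
  moreover have "- deriv h z * f (g z + w * exp (t z))
      + (deriv g z + w * deriv t z * exp (t z)) * deriv f (g z + w * exp (t z))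
      = deriv f (g z) * deriv g z - deriv h z * f (g z)" for z w
    by (rule exp_multiple_difference_deriv_eq[OF f g assms(8), where C = "exp (L w) * sin (of_real pi * w)"])
       (auto intro!: derivative_eq_intros holomorphic_on_UNIV_has_field_derivative[OF g]
          holomorphic_on_UNIV_has_field_derivative[OF assms(7)] simp: eq exp_add algebra_simps)
  ultimately show ?thesis
    by (intro conjI allI exI[of _ "\<lambda>z. deriv f (g z) * deriv g z - deriv h z * f (g z)"]) auto
qed

end
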